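(* Let $\mathbf{A}\in\mathbb{R}^{d\times n}_{\ge0}$, $\epsilon\in[0,\frac12]$, $p\ge2$. Consider the iterates $w_t$ of the algorithm PNormPacking described in the context, and define $\Phi_t = \|\mathbf{A}w_t\|_p - \|w_t\|_1$. Then in every iteration $t$ of the algorithm, $\Phi_{t+1}\le\Phi_t$.
   Context: Powers of vectors are entrywise, $\circ$ is the entrywise product. Algorithm PNormPacking$(\mathbf{A},\epsilon,p)$: set $\eta = 1/p$, $T = \frac{4p\log(nd/\epsilon)}{\epsilon}$, $w_0 = \frac{\epsilon}{n^2 d}\mathbf{1}$, $z=\mathbf{0}$, $t=0$. While $\|w_t\|_1\le\epsilon^{-1}$: let $v_t = \mathbf{A}w_t/\|\mathbf{A}w_t\|_p$, $g_t = \max(0,\mathbf{1}-\mathbf{A}^\top(v_t)^{p-1})$ entrywise, $w_{t+1} = w_t\circ(1+\eta g_t)$, $z\leftarrow z+(v_t)^{p-1}$, $t\leftarrow t+1$; if $t\ge T$, return $z/\|z\|_q$ with $q = p/(p-1)$. If the loop exits, return $w_t/\|w_t\|_1$. *)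

theory Defs
  imports Complex_Main
begin

text \<open>Matrices A in R^{d x n} are functions 'd => 'n => real over finite index types;
  vectors in R^n are functions 'n => real. Powers of vectors are entrywise (powr).\<close>

definition pnorm :: "real \<Rightarrow> ('a::finite \<Rightarrow> real) \<Rightarrow> real" where
  "pnorm p x = (\<Sum>i\<in>UNIV. \<bar>x i\<bar> powr p) powr (1 / p)"

definition l1norm :: "('a::finite \<Rightarrow> real) \<Rightarrow> real" where
  "l1norm x = (\<Sum>i\<in>UNIV. \<bar>x i\<bar>)"

definition matvec :: "('d::finite \<Rightarrow> 'n::finite \<Rightarrow> real) \<Rightarrow> ('n \<Rightarrow> real) \<Rightarrow> 'd \<Rightarrow> real" where
  "matvec A w = (\<lambda>i. \<Sum>j\<in>UNIV. A i j * w j)"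

definition matTvec :: "('d::finite \<Rightarrow> 'n::finite \<Rightarrow> real) \<Rightarrow> ('d \<Rightarrow> real) \<Rightarrow> 'n \<Rightarrow> real" where
  "matTvec A v = (\<lambda>j. \<Sum>i\<in>UNIV. A i j * v i)"

definition pnp_v :: "('d::finite \<Rightarrow> 'n::finite \<Rightarrow> real) \<Rightarrow> real \<Rightarrow> ('n \<Rightarrow> real) \<Rightarrow> 'd \<Rightarrow> real" where
  "pnp_v A p w = (\<lambda>i. matvec A w i / pnorm p (matvec A w))"

definition pnp_g :: "('d::finite \<Rightarrow> 'n::finite \<Rightarrow> real) \<Rightarrow> real \<Rightarrow> ('n \<Rightarrow> real) \<Rightarrow> 'n \<Rightarrow> real" where
  "pnp_g A p w = (\<lambda>j. max 0 (1 - matTvec A (\<lambda>i. pnp_v A p w i powr (p - 1)) j))"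

definition pnp_step :: "('d::finite \<Rightarrow> 'n::finite \<Rightarrow> real) \<Rightarrow> real \<Rightarrow> ('n \<Rightarrow> real) \<Rightarrow> 'n \<Rightarrow> real" where
  "pnp_step A p w = (\<lambda>j. w j * (1 + (1 / p) * pnp_g A p w j))"

definition pnp_w :: "('d::finite \<Rightarrow> 'n::finite \<Rightarrow> real) \<Rightarrow> real \<Rightarrow> real \<Rightarrow> nat \<Rightarrow> 'n \<Rightarrow> real" where
  "pnp_w A eps p t = (pnp_step A p ^^ t) (\<lambda>_. eps / (real (card (UNIV :: 'n set)) ^ 2 * real (card (UNIV :: 'd set))))"

definition pnp_T :: "('d::finite \<Rightarrow> 'n::finite \<Rightarrow> real) \<Rightarrow> real \<Rightarrow> real \<Rightarrow> real" where
  "pnp_T A eps p = 4 * p * ln (real (card (UNIV :: 'n set)) * real (card (UNIV :: 'd set)) / eps) / eps"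

definition pnp_Phi :: "('d::finite \<Rightarrow> 'n::finite \<Rightarrow> real) \<Rightarrow> real \<Rightarrow> real \<Rightarrow> nat \<Rightarrow> real" where
  "pnp_Phi A eps p t = pnorm p (matvec A (pnp_w A eps p t)) - l1norm (pnp_w A eps p t)"

text \<open>Iteration t of the algorithm is executed: the while-test passed at every step s <= t
  and the algorithm has not returned because of the counter, i.e. t < T.\<close>
definition pnp_runs :: "('d::finite \<Rightarrow> 'n::finite \<Rightarrow> real) \<Rightarrow> real \<Rightarrow> real \<Rightarrow> nat \<Rightarrow> bool" where
  "pnp_runs A eps p t \<longleftrightarrow> (\<forall>s\<le>t. l1norm (pnp_w A eps p s) \<le> 1 / eps) \<and> real t < pnp_T A eps p"

end

theory Submission
  imports Defs "HOL-Analysis.Convex"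
begin

(* Write y = A w, N = ||y||_p and h = A^T (y/N)^(p-1), so that g = max(0, 1 - h).
  One step turns y into y + z/p with z = A (w o g), and increases ||w||_1 by S/p with
  S = sum_j w_j g_j.  Since 0 <= g <= 1, each ratio z_i/y_i lies in [0,1], and
  (1 + x/p)^p <= e^x <= 1 + x + x^2 together with Cauchy-Schwarz (z_i^2 <= y_i q_i, q = A (w o g^2))
  gives (y_i + z_i/p)^p <= y_i^p + y_i^(p-1) (z_i + q_i).  Summed over i, the first-order
  term is N^(p-1) sum_j w_j (g_j + g_j^2) h_j <= N^(p-1) S, because (g + g^2) h <= g when
  g = max(0, 1 - h).  Hence ||y + z/p||_p^p <= N^p + N^(p-1) S <= (N + S/p)^p by Bernoulli. *)

lemma Bernoulli_inequality_powr:
  fixes x p :: real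
  assumes "0 \<le> x" "1 \<le> p"
  shows "1 + p * x \<le> (1 + x) powr p"
proof -
  let ?f = "\<lambda>t::real. (1 + t) powr p - 1 - p * t"
  have "?f 0 \<le> ?f x"
  proof (rule DERIV_nonneg_imp_nondecreasing[OF assms(1)])
    fix t :: real
    assume t: "0 \<le> t" "t \<le> x"
    have "(?f has_real_derivative p * (1 + t) powr (p - 1) * 1 - 0 - p * 1) (at t)"
      using t by (auto intro!: derivative_eq_intros)
    moreover have "1 \<le> (1 + t) powr (p - 1)"
      using t assms by (simp add: ge_one_powr_ge_zero)
    then have "0 \<le> p * (1 + t) powr (p - 1) * 1 - 0 - p * 1"
      using assms by (simp add: algebra_simps)
    ultimately show "\<exists>D. (?f has_real_derivative D) (at t) \<and> 0 \<le> D" by blast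
  qed
  then show ?thesis by simp
qed

lemma powr_tangent_le:
  fixes x d p :: real
  assumes "0 \<le> x" "0 \<le> d" "1 \<le> p"
  shows "x powr p + p * x powr (p - 1) * d \<le> (x + d) powr p"
proof (cases "x = 0")
  case False
  then have x: "0 < x" using assms by simp
  have "x powr p + p * x powr (p - 1) * d = x powr p * (1 + p * (d / x))"
    using x by (simp add: powr_diff field_simps)
  also have "\<dots> \<le> x powr p * (1 + d / x) powr p"
    using x assms by (intro mult_left_mono Bernoulli_inequality_powr) auto
  also have "\<dots> = (x * (1 + d / x)) powr p"
    using x assms by (simp add: powr_mult)
  also have "x * (1 + d / x) = x + d"
    using x by (simp add: field_simps)
  finally show ?thesis .
qed simp

lemma one_plus_div_powr_le:
  fixes x p :: real
  assumes "0 \<le> x" "x \<le> 1" "0 < p"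
  shows "(1 + x / p) powr p \<le> 1 + x + x\<^sup>2"
proof -
  have "(1 + x / p) powr p \<le> exp (x / p) powr p"
    using assms by (intro powr_mono2) (auto simp: exp_ge_add_one_self)
  also have "\<dots> = exp x"
    using assms by (simp add: powr_def)
  also have "\<dots> \<le> 1 + x + x\<^sup>2"
    using assms by (intro exp_bound) auto
  finally show ?thesis .
qed

lemma Cauchy_Schwarz_ineq_sum_weighted:
  fixes c f :: "'a \<Rightarrow> real"
  assumes "\<And>j. 0 \<le> c j"
  shows "(\<Sum>j\<in>I. c j * f j)\<^sup>2 \<le> (\<Sum>j\<in>I. c j) * (\<Sum>j\<in>I. c j * (f j)\<^sup>2)"
proof -
  have "(\<Sum>j\<in>I. sqrt (c j) * (sqrt (c j) * f j))\<^sup>2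
      \<le> (\<Sum>j\<in>I. (sqrt (c j))\<^sup>2) * (\<Sum>j\<in>I. (sqrt (c j) * f j)\<^sup>2)"
    by (rule Cauchy_Schwarz_ineq_sum)
  moreover have "sqrt (c j) * (sqrt (c j) * f j) = c j * f j" for j
    using assms[of j] by (simp flip: mult.assoc)
  ultimately show ?thesis
    using assms by (simp add: power_mult_distrib)
qed

lemma add_div_powr_le:
  fixes y z q p :: real
  assumes "0 \<le> z" "z \<le> y" "z\<^sup>2 \<le> y * q" "0 < p"
  shows "(y + z / p) powr p \<le> y powr p + y powr (p - 1) * (z + q)"
proof (cases "y = 0")
  case False
  then have y: "0 < y" using assms by simp
  define x where "x = z / y"
  have x: "0 \<le> x" "x \<le> 1" using assms y by (auto simp: x_def)
  have "y + z / p = y * (1 + x / p)"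
    using y by (simp add: x_def field_simps)
  then have "(y + z / p) powr p = y powr p * (1 + x / p) powr p"
    using y x assms by (simp add: powr_mult)
  also have "\<dots> \<le> y powr p * (1 + x + x\<^sup>2)"
    using x assms by (intro mult_left_mono one_plus_div_powr_le) auto
  also have "\<dots> = y powr (p - 1) * (y + z + z\<^sup>2 / y)"
    using y by (simp add: x_def powr_diff field_simps power2_eq_square)
  also have "\<dots> \<le> y powr (p - 1) * (y + z + q)"
    using y assms by (intro mult_left_mono) (auto simp: field_simps)
  also have "\<dots> = y powr p + y powr (p - 1) * (z + q)"
    using y by (simp add: powr_diff field_simps)
  finally show ?thesis .
qed (use assms in simp)

lemma max_0_one_minus_gain_le:
  fixes h :: real
  assumes "0 \<le> h"
  shows "(max 0 (1 - h) + (max 0 (1 - h))\<^sup>2) * h \<le> max 0 (1 - h)"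
proof (cases "h \<le> 1")
  case True
  have "(1 - h) - (1 - h + (1 - h)\<^sup>2) * h = (1 - h) ^ 3"
    by (simp add: power2_eq_square power3_eq_cube algebra_simps)
  moreover have "0 \<le> (1 - h) ^ 3" using True by simp
  moreover have "max 0 (1 - h) = 1 - h" using True by simp
  ultimately show ?thesis by linarith
qed simp

lemma sum_powr_eq_pnorm_powr:
  assumes "\<And>i. 0 \<le> y i" "0 < p"
  shows "(\<Sum>i\<in>UNIV. y i powr p) = pnorm p y powr p"
  using assms by (simp add: pnorm_def powr_powr sum_nonneg)

lemma abs_le_pnorm:
  assumes "0 < p"
  shows "\<bar>x i\<bar> \<le> pnorm p x"
proof -
  have "\<bar>x i\<bar> = (\<bar>x i\<bar> powr p) powr (1 / p)"
    using assms by (simp add: powr_powr)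
  also have "\<dots> \<le> pnorm p x"
    unfolding pnorm_def using assms
    by (intro powr_mono2 member_le_sum) auto
  finally show ?thesis .
qed

lemma pnorm_le_of_sum_powr_le:
  assumes "(\<Sum>i\<in>UNIV. \<bar>x i\<bar> powr p) \<le> N powr p" "0 \<le> N" "0 < p"
  shows "pnorm p x \<le> N"
proof -
  have "pnorm p x \<le> (N powr p) powr (1 / p)"
    unfolding pnorm_def using assms by (intro powr_mono2) (auto intro: sum_nonneg)
  also have "\<dots> = N" using assms by (simp add: powr_powr)
  finally show ?thesis .
qed

lemma matvec_nonneg:
  assumes "\<And>i j. 0 \<le> A i j" "\<And>j. 0 \<le> w j"
  shows "0 \<le> matvec A w i"
  using assms by (simp add: matvec_def sum_nonneg)

lemma pnp_g_bounds:
  assumes "\<And>i j. 0 \<le> A i j"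
  shows "0 \<le> pnp_g A p w j" "pnp_g A p w j \<le> 1"
  using assms by (auto simp: pnp_g_def matTvec_def intro!: sum_nonneg)

lemma matvec_pnp_step:
  "matvec A (pnp_step A p w) = (\<lambda>i. matvec A w i + matvec A (\<lambda>j. w j * pnp_g A p w j) i / p)"
  by (auto simp: matvec_def pnp_step_def sum.distrib sum_divide_distrib algebra_simps)

lemma l1norm_pnp_step:
  assumes "\<And>i j. 0 \<le> A i j" "\<And>j. 0 \<le> w j" "0 < p"
  shows "l1norm (pnp_step A p w) = l1norm w + (\<Sum>j\<in>UNIV. w j * pnp_g A p w j) / p"
proof -
  have "\<bar>pnp_step A p w j\<bar> = w j + w j * pnp_g A p w j / p" for j
    using assms pnp_g_bounds(1)[of A, OF assms(1)] by (simp add: pnp_step_def algebra_simps)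
  then show ?thesis
    using assms by (simp add: l1norm_def sum.distrib sum_divide_distrib)
qed

lemma sum_pnp_gain_le:
  fixes A :: "'d::finite \<Rightarrow> 'n::finite \<Rightarrow> real"
  assumes "\<And>i j. 0 \<le> A i j" "\<And>j. 0 \<le> w j" "0 < p"
  defines "y \<equiv> matvec A w" and "g \<equiv> pnp_g A p w"
  shows "(\<Sum>i\<in>UNIV. y i powr (p - 1) * (\<Sum>j\<in>UNIV. A i j * w j * (g j + (g j)\<^sup>2)))
    \<le> pnorm p y powr (p - 1) * (\<Sum>j\<in>UNIV. w j * g j)"
proof -
  define N where "N = pnorm p y"
  define h where "h j = (\<Sum>i\<in>UNIV. A i j * y i powr (p - 1)) / N powr (p - 1)" for j
  have y: "0 \<le> y i" for i
    unfolding y_def by (rule matvec_nonneg) (use assms in auto)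
  have h_nonneg: "0 \<le> h j" for j
    unfolding h_def using assms by (auto intro!: sum_nonneg divide_nonneg_nonneg)
  have g_eq: "g j = max 0 (1 - h j)" for j
  proof -
    have "(\<Sum>i\<in>UNIV. A i j * (y i / N) powr (p - 1)) = h j"
      using y by (simp add: h_def powr_divide sum_divide_distrib)
    then show ?thesis
      by (simp add: g_def pnp_g_def matTvec_def pnp_v_def flip: y_def N_def)
  qed
  have N_powr_h: "N powr (p - 1) * h j = (\<Sum>i\<in>UNIV. A i j * y i powr (p - 1))" for j
  proof (cases "N = 0")
    case True
    then have "y i = 0" for i
      using abs_le_pnorm[OF assms(3), of y i] y[of i] by (simp add: N_def)
    then show ?thesis using True by (simp add: h_def)
  qed (simp add: h_def)
  have "(\<Sum>i\<in>UNIV. y i powr (p - 1) * (\<Sum>j\<in>UNIV. A i j * w j * (g j + (g j)\<^sup>2)))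
      = (\<Sum>i\<in>UNIV. \<Sum>j\<in>UNIV. y i powr (p - 1) * (A i j * w j * (g j + (g j)\<^sup>2)))"
    by (simp add: sum_distrib_left)
  also have "\<dots> = (\<Sum>j\<in>UNIV. \<Sum>i\<in>UNIV. y i powr (p - 1) * (A i j * w j * (g j + (g j)\<^sup>2)))"
    by (rule sum.swap)
  also have "\<dots> = (\<Sum>j\<in>UNIV. w j * (g j + (g j)\<^sup>2) * (\<Sum>i\<in>UNIV. A i j * y i powr (p - 1)))"
    by (simp add: sum_distrib_left mult_ac)
  also have "\<dots> = N powr (p - 1) * (\<Sum>j\<in>UNIV. w j * ((g j + (g j)\<^sup>2) * h j))"
    by (simp add: sum_distrib_left mult_ac flip: N_powr_h)
  also have "\<dots> \<le> N powr (p - 1) * (\<Sum>j\<in>UNIV. w j * g j)"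
    using assms h_nonneg g_eq max_0_one_minus_gain_le
    by (intro mult_left_mono sum_mono) (auto intro: mult_left_mono)
  finally show ?thesis unfolding N_def .
qed

lemma pnp_step_potential_le:
  fixes A :: "'d::finite \<Rightarrow> 'n::finite \<Rightarrow> real"
  assumes "\<And>i j. 0 \<le> A i j" "\<And>j. 0 \<le> w j" "1 \<le> p"
  shows "pnorm p (matvec A (pnp_step A p w)) - l1norm (pnp_step A p w)
    \<le> pnorm p (matvec A w) - l1norm w"
proof -
  have p: "0 < p" using assms by simp
  define y where "y = matvec A w"
  define N where "N = pnorm p y"
  define g where "g = pnp_g A p w"
  define z where "z i = (\<Sum>j\<in>UNIV. A i j * w j * g j)" for i
  define q where "q i = (\<Sum>j\<in>UNIV. A i j * w j * (g j)\<^sup>2)" for i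
  define S where "S = (\<Sum>j\<in>UNIV. w j * g j)"
  have g: "0 \<le> g j" "g j \<le> 1" for j
    unfolding g_def using pnp_g_bounds[of A, OF assms(1)] by auto
  have y: "0 \<le> y i" for i
    unfolding y_def by (rule matvec_nonneg) (use assms in auto)
  have z: "0 \<le> z i" "z i \<le> y i" for i
    unfolding z_def y_def matvec_def using assms g
    by (auto intro!: sum_nonneg sum_mono simp: mult_left_le)
  have zq: "(z i)\<^sup>2 \<le> y i * q i" for i
    unfolding z_def q_def y_def matvec_def
    by (rule Cauchy_Schwarz_ineq_sum_weighted) (simp add: assms)
  have S: "0 \<le> S" unfolding S_def using assms g by (auto intro!: sum_nonneg)
  have N: "0 \<le> N" unfolding N_def pnorm_def by simp
  have "(\<Sum>i\<in>UNIV. \<bar>y i + z i / p\<bar> powr p) \<le> (\<Sum>i\<in>UNIV. y i powr p + y i powr (p - 1) * (z i + q i))"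
    using y z zq p by (intro sum_mono) (simp add: add_div_powr_le)
  also have "\<dots> = N powr p
      + (\<Sum>i\<in>UNIV. y i powr (p - 1) * (\<Sum>j\<in>UNIV. A i j * w j * (g j + (g j)\<^sup>2)))"
    using y p
    by (simp add: sum.distrib z_def q_def distrib_left N_def sum_powr_eq_pnorm_powr)
  also have "\<dots> \<le> N powr p + p * N powr (p - 1) * (S / p)"
    using sum_pnp_gain_le[OF assms(1,2) p] p by (simp add: y_def N_def g_def S_def)
  also have "\<dots> \<le> (N + S / p) powr p"
    using N S assms by (intro powr_tangent_le) auto
  finally have "pnorm p (\<lambda>i. y i + z i / p) \<le> N + S / p"
    using N S p by (intro pnorm_le_of_sum_powr_le) auto
  moreover have "matvec A (pnp_step A p w) = (\<lambda>i. y i + z i / p)"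
    unfolding matvec_pnp_step by (simp add: y_def z_def g_def matvec_def mult.assoc)
  moreover have "l1norm (pnp_step A p w) = l1norm w + S / p"
    using assms p by (simp add: l1norm_pnp_step S_def g_def)
  ultimately show ?thesis by (simp add: N_def y_def)
qed

lemma pnp_w_nonneg:
  assumes "0 < eps" "0 < p"
  shows "0 \<le> pnp_w A eps p t j"
proof (induction t arbitrary: j)
  case (Suc t)
  have "0 \<le> pnp_g A p (pnp_w A eps p t) j" by (simp add: pnp_g_def)
  then show ?case
    using Suc assms by (simp add: pnp_w_def pnp_step_def)
qed (use assms in \<open>simp add: pnp_w_def\<close>)

text \<open>The potential decreases along every step of the iteration.\<close>

theorem lemma3:
  fixes A :: "'d::finite \<Rightarrow> 'n::finite \<Rightarrow> real" and eps p :: real and t :: nat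
  assumes "\<And>i j. A i j \<ge> 0"
    and "0 < eps" and "eps \<le> 1/2"
    and "p \<ge> 2"
    and "pnp_runs A eps p t"
  shows "pnp_Phi A eps p (Suc t) \<le> pnp_Phi A eps p t"
proof -
  have "pnp_w A eps p (Suc t) = pnp_step A p (pnp_w A eps p t)"
    by (simp add: pnp_w_def)
  moreover have "0 \<le> pnp_w A eps p t j" for j
    using assms by (intro pnp_w_nonneg) auto
  ultimately show ?thesis
    unfolding pnp_Phi_def using assms by (simp add: pnp_step_potential_le)
qed

end
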